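(* Let $\mathcal{G}$ be the information-flow graph of a single-sender single-uniprior index-coding instance and fix any index code for it with encoding function $E$. For every receiver $i$ and every predecessor $j$ of $i$ in $\mathcal{G}$, the message $x_j$ is a function of $(E(x_1,\dots,x_n), x_i)$; i.e., receiver $i$ can decode the messages of all its predecessors.
   Context: Single-sender single-uniprior index coding: there are $n$ receivers and $n$ independent messages $x_1,\dots,x_n$; message $x_i$ consists of $q_i\ge 1$ bits, each independently uniformly distributed on $\{0,1\}$. A single sender knows all messages. Receiver $i$ knows $x_i$ a priori and requests a set $\mathcal{W}_i$ of messages with $x_i\notin\mathcal{W}_i$. The information-flow graph is the directed graph $\mathcal{G}=(\mathcal{V},\mathcal{A})$ with $\mathcal{V}=\{1,\dots,n\}$ and an arc $(j\to i)\in\mathcal{A}$ iff $x_j\in\mathcal{W}_i$. An index code of length $\ell$ consists of an encoding function $E:\{0,1\}^{\sum_i q_i}\to\{0,1\}^\ell$ and, for each receiver $i$, a decoding function $D_i$ such that $D_i(E(x_1,\dots,x_n),x_i)$ equals the tuple of messages in $\mathcal{W}_i$ for all values of the messages. A vertex $j$ is a predecessor of vertex $i$ iff there is a directed path in $\mathcal{G}$ from $j$ to $i$. *)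

theory Defs
  imports Main
begin

text \<open>A message assignment is a function
  x :: nat => bool list with x i of length q i for i in 1..n (and x i = [] elsewhere,
  so that assignments correspond bijectively to tuples (x_1,...,x_n)).\<close>

definition msgs :: "nat \<Rightarrow> (nat \<Rightarrow> nat) \<Rightarrow> (nat \<Rightarrow> bool list) set" where
  "msgs n q = {x. (\<forall>i\<in>{1..n}. length (x i) = q i) \<and> (\<forall>i. i \<notin> {1..n} \<longrightarrow> x i = [])}"

text \<open>Single-uniprior instance: receiver i knows x_i and requests W i, x_i not in W i.\<close>
definition su_instance :: "nat \<Rightarrow> (nat \<Rightarrow> nat) \<Rightarrow> (nat \<Rightarrow> nat set) \<Rightarrow> bool" where
  "su_instance n q W \<longleftrightarrow> (\<forall>i\<in>{1..n}. 1 \<le> q i \<and> W i \<subseteq> {1..n} \<and> i \<notin> W i)"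

definition ifg_arcs :: "nat \<Rightarrow> (nat \<Rightarrow> nat set) \<Rightarrow> (nat \<times> nat) set" where
  "ifg_arcs n W = {(j, i). i \<in> {1..n} \<and> j \<in> {1..n} \<and> j \<in> W i}"

definition is_index_code ::
  "nat \<Rightarrow> (nat \<Rightarrow> nat) \<Rightarrow> (nat \<Rightarrow> nat set) \<Rightarrow> nat \<Rightarrow> ((nat \<Rightarrow> bool list) \<Rightarrow> bool list)
   \<Rightarrow> (nat \<Rightarrow> bool list \<Rightarrow> bool list \<Rightarrow> nat \<Rightarrow> bool list) \<Rightarrow> bool" where
  "is_index_code n q W l E D \<longleftrightarrow>
     (\<forall>x\<in>msgs n q. length (E x) = l) \<and>
     (\<forall>i\<in>{1..n}. \<forall>x\<in>msgs n q. \<forall>j\<in>W i. D i (E x) (x i) j = x j)"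

end

theory Submission
  imports Defs
begin

text \<open>If i can recover x_z, it can also run
  receiver z's decoder on (E x, x_z) and so recover everything z requests; hence
  decodability propagates backwards along any path into i.\<close>

definition decodable_from ::
  "'x set \<Rightarrow> ('x \<Rightarrow> 'c) \<Rightarrow> ('x \<Rightarrow> 'a) \<Rightarrow> ('x \<Rightarrow> 'b) \<Rightarrow> bool" where
  "decodable_from X E side target \<longleftrightarrow> (\<exists>f. \<forall>x\<in>X. f (E x) (side x) = target x)"

lemma decodable_from_trans:
  assumes "decodable_from X E s t" and "decodable_from X E t u"
  shows "decodable_from X E s u"
proof -
  obtain f where f: "\<forall>x\<in>X. f (E x) (s x) = t x"
    using assms(1) by (auto simp: decodable_from_def)
  obtain g where g: "\<forall>x\<in>X. g (E x) (t x) = u x"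
    using assms(2) by (auto simp: decodable_from_def)
  have "\<forall>x\<in>X. g (E x) (f (E x) (s x)) = u x"
    using f g by simp
  then show ?thesis
    unfolding decodable_from_def by (rule exI[where x = "\<lambda>e v. g e (f e v)"])
qed

lemma index_code_decodes_arc:
  assumes "is_index_code n q W l E D" and "(j, i) \<in> ifg_arcs n W"
  shows "decodable_from (msgs n q) E (\<lambda>x. x i) (\<lambda>x. x j)"
proof -
  have "i \<in> {1..n}" "j \<in> W i"
    using assms(2) by (auto simp: ifg_arcs_def)
  then have "\<forall>x\<in>msgs n q. D i (E x) (x i) j = x j"
    using assms(1) by (simp add: is_index_code_def)
  then show ?thesis
    unfolding decodable_from_def by (rule exI[where x = "\<lambda>e v. D i e v j"])
qed

lemma index_code_decodes_predecessor:
  assumes "is_index_code n q W l E D" and "(j, i) \<in> (ifg_arcs n W)\<^sup>+"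
  shows "decodable_from (msgs n q) E (\<lambda>x. x i) (\<lambda>x. x j)"
  using assms(2)
proof (induction j rule: converse_trancl_induct)
  case (base j)
  then show ?case
    using assms(1) by (rule index_code_decodes_arc[rotated])
next
  case (step j z)
  show ?case
    using step.IH index_code_decodes_arc[OF assms(1) step.hyps(1)]
    by (rule decodable_from_trans)
qed

theorem lemma1:
  fixes n l :: nat and q :: "nat \<Rightarrow> nat" and W :: "nat \<Rightarrow> nat set"
    and E :: "(nat \<Rightarrow> bool list) \<Rightarrow> bool list"
    and D :: "nat \<Rightarrow> bool list \<Rightarrow> bool list \<Rightarrow> nat \<Rightarrow> bool list"
  assumes "su_instance n q W"
    and "is_index_code n q W l E D"
    and "i \<in> {1..n}"
    and "(j, i) \<in> (ifg_arcs n W)\<^sup>+"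
  shows "\<exists>f. \<forall>x\<in>msgs n q. f (E x) (x i) = x j"
  using index_code_decodes_predecessor[OF assms(2,4)]
  by (simp add: decodable_from_def)

end
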